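(* Let $a,b,c\in\mathbb{R}$ be such that $$B=\begin{pmatrix}1&a&b\\ a&1&c\\ b&c&1\end{pmatrix}$$ is positive semidefinite. Let $\mathbb{I}\subseteq[0,\infty)$ be an interval and $f:\mathbb{I}\to[-1,1]$ a strictly decreasing function with range $[-1,1]$ satisfying $f(p+q)=f(p)f(q)-\sqrt{1-f(p)^2}\sqrt{1-f(q)^2}$ whenever $p,q,p+q\in\mathbb{I}$. Let $g:[0,\infty)\to[0,\infty)$ be metric-preserving and set $h=g\circ f^{-1}$. Then $$h(a)\le h(b)+h(c).$$ Consequently, for every real $k\ge2$, $$\sqrt[k]{1-|a|^k}\le\sqrt[k]{1-|b|^k}+\sqrt[k]{1-|c|^k}.$$
   Context: A function $g:[0,\infty)\to[0,\infty)$ is metric-preserving if for every metric space $(M,d)$, the function $g\circ d$ is again a metric on $M$. *)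

theory Defs
  imports "HOL-Analysis.Analysis"
begin

definition psd :: "real^'n^'n \<Rightarrow> bool" where
  "psd A \<longleftrightarrow> transpose A = A \<and> (\<forall>x. 0 \<le> x \<bullet> (A *v x))"

text \<open>Metric-preserving functions g : [0,oo) -> [0,oo): for every metric space (M,d),
  g o d is again a metric on M.  Metric spaces are taken with carrier a set of reals
  (HOL cannot quantify over types inside a definition).\<close>
definition metric_preserving :: "(real \<Rightarrow> real) \<Rightarrow> bool" where
  "metric_preserving g \<longleftrightarrow> g ` {0..} \<subseteq> {0..} \<and>
     (\<forall>(M::real set) d. Metric_space M d \<longrightarrow> Metric_space M (\<lambda>x y. g (d x y)))"

end

theory Submission
  imports Defs
begin

(*
  Positive semidefiniteness of the correlation matrix B says that the quadratic
  form  x^2 + y^2 + z^2 + 2axy + 2bxz + 2cyz  is nonnegative.  Eliminating z by completing the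
  square leaves a binary form whose discriminant condition reads
      |a - bc| <= sqrt (1 - b^2) * sqrt (1 - c^2),
  and by the symmetry of the form the same holds for every permutation of a, b, c.

  Part 1: the functional equation is the addition law of a "cosine" f, so for x = f^-1 a,
  y = f^-1 b, z = f^-1 c we get f (y + z) = bc - sqrt (1 - b^2) sqrt (1 - c^2) <= a = f x,
  whence x <= y + z since f is strictly decreasing.  Thus (x, y, z) is a triangle triplet,
  and metric-preserving functions preserve triangle triplets (realise the triplet as a
  three-point metric space).

  Part 2 is proved directly: the discriminant bound gives the "sine triangle inequality"
  sqrt (1 - a^2) <= sqrt (1 - b^2) + sqrt (1 - c^2), and the map
      sin_power k y = (1 - (1 - y^2) powr (k/2)) powr (1/k)
  is monotone and subadditive on [0,1] for k >= 2 (sin_power k t / t is nondecreasing, a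
  consequence of the convexity of powr), while
      (1 - |a| powr k) powr (1/k) = sin_power k (sqrt (1 - a^2)).
*)

section \<open>The correlation inequality\<close>

definition corr_psd :: "real \<Rightarrow> real \<Rightarrow> real \<Rightarrow> bool" where
  "corr_psd a b c \<longleftrightarrow>
     (\<forall>x y z. 0 \<le> x\<^sup>2 + y\<^sup>2 + z\<^sup>2 + 2*a*x*y + 2*b*x*z + 2*c*y*z)"

lemma psd_imp_corr_psd:
  assumes "psd (vector [vector [1, a, b], vector [a, 1, c], vector [b, c, 1]] :: real^3^3)"
  shows "corr_psd a b c"
  unfolding corr_psd_def
proof (intro allI)
  fix x y z :: real
  have "0 \<le> (vector [x, y, z] :: real^3) \<bullet>
      ((vector [vector [1, a, b], vector [a, 1, c], vector [b, c, 1]] :: real^3^3) *v vector [x, y, z])"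
    using assms unfolding psd_def by blast
  also have "\<dots> = x\<^sup>2 + y\<^sup>2 + z\<^sup>2 + 2*a*x*y + 2*b*x*z + 2*c*y*z"
    by (simp add: inner_vec_def matrix_vector_mult_def sum_3 power2_eq_square algebra_simps)
  finally show "0 \<le> x\<^sup>2 + y\<^sup>2 + z\<^sup>2 + 2*a*x*y + 2*b*x*z + 2*c*y*z" .
qed

text \<open>Simultaneously permuting rows and columns of B permutes its off-diagonal entries.\<close>
lemma corr_psd_swap: "corr_psd a b c \<Longrightarrow> corr_psd b a c"
  unfolding corr_psd_def
proof (intro allI)
  fix x y z :: real
  assume "\<forall>x y z. 0 \<le> x\<^sup>2 + y\<^sup>2 + z\<^sup>2 + 2*a*x*y + 2*b*x*z + 2*c*y*z"
  then have "0 \<le> x\<^sup>2 + z\<^sup>2 + y\<^sup>2 + 2*a*x*z + 2*b*x*y + 2*c*z*y" by blast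
  then show "0 \<le> x\<^sup>2 + y\<^sup>2 + z\<^sup>2 + 2*b*x*y + 2*a*x*z + 2*c*y*z" by (simp add: algebra_simps)
qed

lemma corr_psd_rotate: "corr_psd a b c \<Longrightarrow> corr_psd c a b"
  unfolding corr_psd_def
proof (intro allI)
  fix x y z :: real
  assume "\<forall>x y z. 0 \<le> x\<^sup>2 + y\<^sup>2 + z\<^sup>2 + 2*a*x*y + 2*b*x*z + 2*c*y*z"
  then have "0 \<le> z\<^sup>2 + x\<^sup>2 + y\<^sup>2 + 2*a*z*x + 2*b*z*y + 2*c*x*y" by blast
  then show "0 \<le> x\<^sup>2 + y\<^sup>2 + z\<^sup>2 + 2*c*x*y + 2*a*x*z + 2*b*y*z" by (simp add: algebra_simps)
qed

lemma binary_form_discriminant: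
  fixes p q r :: real
  assumes form: "\<And>x y. 0 \<le> p*x\<^sup>2 + 2*r*x*y + q*y\<^sup>2"
  shows "r\<^sup>2 \<le> p*q"
proof (cases "p = 0")
  case True
  have "r = 0"
  proof (rule ccontr)
    assume "r \<noteq> 0"
    then have "p * (-(q+1)/(2*r))\<^sup>2 + 2*r*(-(q+1)/(2*r))*1 + q*1\<^sup>2 = -1"
      using True by (simp add: field_simps)
    then show False using form[of "-(q+1)/(2*r)" 1] by linarith
  qed
  then show ?thesis using True by simp
next
  case False
  have "p > 0" using form[of 1 0] False by simp
  have "p * (p*q - r\<^sup>2) = p*(-r)\<^sup>2 + 2*r*(-r)*p + q*p\<^sup>2"
    by (simp add: power2_eq_square algebra_simps)
  also have "\<dots> \<ge> 0" using form[of "-r" p] .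
  finally show ?thesis using \<open>p > 0\<close> by (simp add: zero_le_mult_iff)
qed

text \<open>Choosing z = -(bx + cy)
  reduces the ternary form to a binary one with coefficients 1 - b^2, a - bc, 1 - c^2.\<close>
lemma corr_psd_bound:
  assumes "corr_psd a b c"
  shows "b\<^sup>2 \<le> 1" "c\<^sup>2 \<le> 1" "\<bar>a - b*c\<bar> \<le> sqrt (1 - b\<^sup>2) * sqrt (1 - c\<^sup>2)"
proof -
  have form: "0 \<le> (1 - b\<^sup>2)*x\<^sup>2 + 2*(a - b*c)*x*y + (1 - c\<^sup>2)*y\<^sup>2" for x y
  proof -
    have "0 \<le> x\<^sup>2 + y\<^sup>2 + (-(b*x + c*y))\<^sup>2 + 2*a*x*y + 2*b*x*(-(b*x + c*y)) + 2*c*y*(-(b*x + c*y))"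
      using assms unfolding corr_psd_def by blast
    then show ?thesis by (simp add: power2_eq_square algebra_simps)
  qed
  show b1: "b\<^sup>2 \<le> 1" using form[of 1 0] by simp
  show c1: "c\<^sup>2 \<le> 1" using form[of 0 1] by simp
  have "(a - b*c)\<^sup>2 \<le> (1 - b\<^sup>2) * (1 - c\<^sup>2)"
    using binary_form_discriminant[OF form] .
  then have "sqrt ((a - b*c)\<^sup>2) \<le> sqrt ((1 - b\<^sup>2) * (1 - c\<^sup>2))"
    using real_sqrt_le_mono by blast
  then show "\<bar>a - b*c\<bar> \<le> sqrt (1 - b\<^sup>2) * sqrt (1 - c\<^sup>2)"
    by (simp add: real_sqrt_mult)
qed

section \<open>Metric-preserving functions preserve triangle triplets\<close>

lemma metric_preserving_nonneg: "metric_preserving g \<Longrightarrow> 0 \<le> x \<Longrightarrow> 0 \<le> g x"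
  unfolding metric_preserving_def by auto

text \<open>Apply g to the one-point metric space: a metric vanishes on the diagonal.\<close>
lemma metric_preserving_zero:
  assumes "metric_preserving g"
  shows "g 0 = 0"
proof -
  have "Metric_space {0::real} (\<lambda>x y. 0)" by unfold_locales auto
  then have "Metric_space {0::real} (\<lambda>x y. g 0)"
    using assms unfolding metric_preserving_def by blast
  then show ?thesis using Metric_space.zero[of "{0::real}" "\<lambda>x y. g 0" 0 0] by simp
qed

text \<open>A nondegenerate triplet is realised as the distances of a three-point
  metric space on {0, 1, 2}, which g must map to a metric space again.\<close>
lemma metric_preserving_triangle:
  assumes g: "metric_preserving g" and nonneg: "0 \<le> x" "0 \<le> y" "0 \<le> z"
    and triangle: "x \<le> y + z" "y \<le> x + z" "z \<le> x + y"
  shows "g x \<le> g y + g z"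
proof (cases "x = 0 \<or> y = 0 \<or> z = 0")
  case True
  then show ?thesis
    using triangle nonneg metric_preserving_zero[OF g]
      metric_preserving_nonneg[OF g, of y] metric_preserving_nonneg[OF g, of z]
    by (smt (verit))
next
  case False
  define d where "d = (\<lambda>u v::real. if u = v then 0 else if u + v = 1 then z
                                    else if u + v = 2 then y else x)"
  have "Metric_space {0::real, 1, 2} d"
  proof
    show "0 \<le> d u v" for u v using nonneg by (auto simp: d_def)
    show "d u v = d v u" for u v by (auto simp: d_def add.commute)
    show "u \<in> {0,1,2} \<Longrightarrow> v \<in> {0,1,2} \<Longrightarrow> d u v = 0 \<longleftrightarrow> u = v" for u v
      using False by (auto simp: d_def)
    show "u \<in> {0,1,2} \<Longrightarrow> v \<in> {0,1,2} \<Longrightarrow> w \<in> {0,1,2} \<Longrightarrow> d u w \<le> d u v + d v w"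
      for u v w
      using nonneg triangle by (auto simp: d_def)
  qed
  then have "Metric_space {0::real, 1, 2} (\<lambda>u v. g (d u v))"
    using g unfolding metric_preserving_def by blast
  then have "g (d 1 2) \<le> g (d 1 0) + g (d 0 2)"
    by (rule Metric_space.triangle) auto
  then show ?thesis by (simp add: d_def)
qed

section \<open>Part 1: the inverse of a cosine-like function\<close>

definition cosine_like :: "real set \<Rightarrow> (real \<Rightarrow> real) \<Rightarrow> bool" where
  "cosine_like I f \<longleftrightarrow> is_interval I \<and> I \<subseteq> {0..} \<and>
     strict_antimono_on I f \<and> f ` I = {-1..1} \<and>
     (\<forall>p q. p \<in> I \<longrightarrow> q \<in> I \<longrightarrow> p + q \<in> I \<longrightarrow>
        f (p + q) = f p * f q - sqrt (1 - (f p)\<^sup>2) * sqrt (1 - (f q)\<^sup>2))"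

text \<open>The correlation inequality for a becomes the triangle inequality x <= y + z for the
  "angles" x, y, z with cosines a, b, c: otherwise y + z lies in I between y and x, so
  f x < f (y + z) = bc - sqrt (1 - b^2) sqrt (1 - c^2) <= a.\<close>
lemma cosine_like_angle_triangle:
  assumes f: "cosine_like I f"
    and xyz: "x \<in> I" "y \<in> I" "z \<in> I"
    and corr: "\<bar>f x - f y * f z\<bar> \<le> sqrt (1 - (f y)\<^sup>2) * sqrt (1 - (f z)\<^sup>2)"
  shows "x \<le> y + z"
proof (rule ccontr)
  assume "\<not> x \<le> y + z"
  then have lt: "y + z < x" by simp
  have "y \<le> y + z" using xyz(3) f by (auto simp: cosine_like_def)
  then have yz: "y + z \<in> I"
    using mem_is_interval_1_I[of I y x "y + z"] f xyz lt by (simp add: cosine_like_def)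
  have "f (y + z) = f y * f z - sqrt (1 - (f y)\<^sup>2) * sqrt (1 - (f z)\<^sup>2)"
    using f xyz yz unfolding cosine_like_def by blast
  then have "f (y + z) \<le> f x" using corr by linarith
  moreover have "f x < f (y + z)"
  proof -
    have "strict_antimono_on I f" using f by (simp add: cosine_like_def)
    then show ?thesis using yz xyz(1) lt by (rule monotone_onD)
  qed
  ultimately show False by simp
qed

lemma corr_psd_metric_preserving:
  assumes corr: "corr_psd a b c" and f: "cosine_like I f" and g: "metric_preserving g"
  shows "(g \<circ> the_inv_into I f) a \<le> (g \<circ> the_inv_into I f) b + (g \<circ> the_inv_into I f) c"
proof -
  note A = corr_psd_bound[OF corr]
    and B = corr_psd_bound[OF corr_psd_swap[OF corr]]
    and C = corr_psd_bound[OF corr_psd_rotate[OF corr]]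
  have inj: "inj_on f I"
    using f strict_antimono_iff_antimono unfolding cosine_like_def by blast
  have range: "t \<in> f ` I" if "t\<^sup>2 \<le> 1" for t
    using that f by (simp add: cosine_like_def abs_square_le_1 abs_le_iff)
  define x y z where "x = the_inv_into I f a" "y = the_inv_into I f b" "z = the_inv_into I f c"
  have ra: "a \<in> f ` I" using range B(1) by blast
  have rb: "b \<in> f ` I" using range A(1) by blast
  have rc: "c \<in> f ` I" using range A(2) by blast
  have xyz: "x \<in> I" "y \<in> I" "z \<in> I"
    unfolding x_y_z_def using the_inv_into_into[OF inj _ order_refl] ra rb rc by auto
  have fxyz: "f x = a" "f y = b" "f z = c"
    unfolding x_y_z_def using f_the_inv_into_f[OF inj] ra rb rc by auto
  have "0 \<le> x" "0 \<le> y" "0 \<le> z" using xyz f by (auto simp: cosine_like_def)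
  moreover have "x \<le> y + z" "y \<le> x + z" "z \<le> x + y"
    using cosine_like_angle_triangle[OF f] xyz fxyz A(3) B(3) C(3) by auto
  ultimately have "g x \<le> g y + g z" by (rule metric_preserving_triangle[OF g])
  then show ?thesis unfolding x_y_z_def by simp
qed

section \<open>Part 2: the power means of sines\<close>

lemma powr_le_base: "0 \<le> x \<Longrightarrow> x \<le> 1 \<Longrightarrow> 1 \<le> m \<Longrightarrow> x powr m \<le> (x::real)"
  by (cases "x = 0") (auto intro: powr_le_one_le)

text \<open>For m >= 1 the function psi v = 1 - (1 - v) powr m satisfies
  psi (lam * v) >= lam powr m * psi v on [0,1]; this follows from convexity of powr,
  which gives (1 - lam v) powr m <= (1 - lam) + lam (1 - v) powr m.\<close>
lemma powr_convex_scaling: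
  fixes m lam v :: real
  assumes m: "1 \<le> m" and lam: "0 \<le> lam" "lam \<le> 1" and v: "0 \<le> v" "v \<le> 1"
  shows "lam powr m * (1 - (1 - v) powr m) \<le> 1 - (1 - lam * v) powr m"
proof -
  define X where "X = (1 - v) powr m"
  have X: "0 \<le> X" "X \<le> 1" using v m by (auto simp: X_def intro!: powr_le1)
  have convex: "(1 - lam * v) powr m \<le> (1 - lam) + lam * X"
  proof (cases "v = 1")
    case True
    then show ?thesis using powr_le_base[of "1 - lam" m] lam m by (simp add: X_def)
  next
    case False
    then have "1 - v \<in> {0<..}" using v by simp
    from convex_onD[OF powr_convex[OF m] lam(1) lam(2) _ this, of 1]
    have "((1 - lam) *\<^sub>R 1 + lam *\<^sub>R (1 - v)) powr m \<le> (1 - lam) * 1 powr m + lam * (1 - v) powr m"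
      by simp
    then show ?thesis by (simp add: X_def algebra_simps)
  qed
  have "lam powr m \<le> lam" using powr_le_base[of lam m] lam m by simp
  then have "(lam powr m - lam) * (1 - X) \<le> 0" using X by (simp add: mult_nonpos_nonneg)
  then show ?thesis using convex by (simp add: X_def[symmetric] algebra_simps)
qed

lemma square_powr_half:
  assumes "0 \<le> (p::real)"
  shows "(p\<^sup>2) powr (k/2) = p powr k"
proof (cases "p = 0")
  case False
  then have "p\<^sup>2 = p powr 2" using assms by (simp add: powr_realpow)
  then show ?thesis by (simp add: powr_powr)
qed simp

definition sin_power :: "real \<Rightarrow> real \<Rightarrow> real" where
  "sin_power k y = (1 - (1 - y\<^sup>2) powr (k/2)) powr (1/k)"

lemma sin_power_cos:
  assumes "0 \<le> p" "p \<le> 1" "0 < k"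
  shows "(1 - p powr k) powr (1/k) = sin_power k (sqrt (1 - p\<^sup>2))"
proof -
  have "p\<^sup>2 \<le> 1" using assms by (simp add: power_le_one)
  then have "(sqrt (1 - p\<^sup>2))\<^sup>2 = 1 - p\<^sup>2" by simp
  moreover have "(p\<^sup>2) powr (k/2) = p powr k"
    using square_powr_half[OF assms(1)] .
  ultimately show ?thesis by (simp add: sin_power_def)
qed

lemma sin_power_radicand_nonneg:
  "0 \<le> (y::real) \<Longrightarrow> y \<le> 1 \<Longrightarrow> 0 < k \<Longrightarrow> 0 \<le> 1 - (1 - y\<^sup>2) powr (k/2)"
  using powr_le1[of "k/2" "1 - y\<^sup>2"] by (simp add: power_le_one)

lemma sin_power_mono:
  assumes "2 \<le> k" "0 \<le> y" "y \<le> y'" "y' \<le> 1"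
  shows "sin_power k y \<le> sin_power k y'"
proof -
  have "y\<^sup>2 \<le> y'\<^sup>2" using assms by (simp add: power_mono)
  then have "(1 - y'\<^sup>2) powr (k/2) \<le> (1 - y\<^sup>2) powr (k/2)"
    using assms by (intro powr_mono2) (auto simp: power_le_one)
  then show ?thesis unfolding sin_power_def using assms sin_power_radicand_nonneg[of y k]
    by (intro powr_mono2) auto
qed

text \<open>Star-shapedness: sin_power k t / t is nondecreasing on (0,1], by the convexity
  estimate with lam = (t/w)^2, v = w^2 and m = k/2.\<close>
lemma sin_power_star_shaped:
  assumes k: "2 \<le> k" and t: "0 \<le> t" "t \<le> w" and w: "0 < w" "w \<le> 1"
  shows "(t / w) * sin_power k w \<le> sin_power k t"
proof -
  define N where "N = 1 - (1 - w\<^sup>2) powr (k/2)"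
  have N: "0 \<le> N" unfolding N_def using sin_power_radicand_nonneg[of w k] w k by simp
  have lam: "0 \<le> (t/w)\<^sup>2" "(t/w)\<^sup>2 \<le> 1" using t w by (auto simp: power_le_one)
  have "((t/w)\<^sup>2) powr (k/2) * N \<le> 1 - (1 - (t/w)\<^sup>2 * w\<^sup>2) powr (k/2)"
    unfolding N_def using powr_convex_scaling[of "k/2" "(t/w)\<^sup>2" "w\<^sup>2"] lam k w
    by (auto simp: power_le_one)
  moreover have "(t/w)\<^sup>2 * w\<^sup>2 = t\<^sup>2" using w by (simp add: power_divide)
  moreover have "((t/w)\<^sup>2) powr (k/2) = (t/w) powr k"
    using square_powr_half t w by simp
  ultimately have scaled: "(t/w) powr k * N \<le> 1 - (1 - t\<^sup>2) powr (k/2)" by simp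
  have "(t/w) * N powr (1/k) = ((t/w) powr k * N) powr (1/k)"
    using t w k N by (simp add: powr_mult powr_powr)
  also have "\<dots> \<le> (1 - (1 - t\<^sup>2) powr (k/2)) powr (1/k)"
    using scaled t w k N by (intro powr_mono2) auto
  finally show ?thesis by (simp add: sin_power_def N_def)
qed

text \<open>Subadditivity, from star-shapedness applied at w = y + z.\<close>
lemma sin_power_subadditive:
  assumes k: "2 \<le> k" and yz: "0 \<le> y" "0 \<le> z" "y + z \<le> 1"
  shows "sin_power k (y + z) \<le> sin_power k y + sin_power k z"
proof (cases "y + z = 0")
  case True
  then have "y = 0" "z = 0" using yz by auto
  then show ?thesis by (simp add: sin_power_def)
next
  case False
  define w where "w = y + z"
  have w: "0 < w" "w \<le> 1" using False yz by (auto simp: w_def)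
  have "(y/w) * sin_power k w + (z/w) * sin_power k w = ((y + z)/w) * sin_power k w"
    by (simp add: add_divide_distrib distrib_right)
  then have "sin_power k w = (y/w) * sin_power k w + (z/w) * sin_power k w"
    using w by (simp add: w_def)
  also have "\<dots> \<le> sin_power k y + sin_power k z"
    using sin_power_star_shaped[OF k _ _ w] yz by (smt (verit) w_def)
  finally show ?thesis by (simp add: w_def)
qed

text \<open>Monotonicity and subadditivity combined: sin_power k preserves the triangle inequality
  s <= u + v on [0,1] (split s = min u s + (s - min u s)).\<close>
lemma sin_power_triangle:
  assumes k: "2 \<le> k" and s: "0 \<le> s" "s \<le> 1" and uv: "0 \<le> u" "u \<le> 1" "0 \<le> v" "v \<le> 1"
    and tri: "s \<le> u + v"
  shows "sin_power k s \<le> sin_power k u + sin_power k v"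
proof -
  define u' where "u' = min u s"
  have "sin_power k s \<le> sin_power k u' + sin_power k (s - u')"
    using sin_power_subadditive[OF k, of u' "s - u'"] s uv unfolding u'_def by auto
  also have "sin_power k u' \<le> sin_power k u"
    using sin_power_mono[OF k, of u' u] s uv unfolding u'_def by auto
  also have "sin_power k (s - u') \<le> sin_power k v"
    using sin_power_mono[OF k, of "s - u'" v] s uv tri unfolding u'_def by auto
  finally show ?thesis by simp
qed

text \<open>The sine triangle inequality: if cos alpha >= cos (beta + gamma) for angles in
  [0, pi/2] then sin alpha <= sin beta + sin gamma, written algebraically.\<close>
lemma sine_triangle:
  fixes p q r :: real
  assumes pqr: "0 \<le> p" "p \<le> 1" "0 \<le> q" "q \<le> 1" "0 \<le> r" "r \<le> 1"
    and cos: "q * r - sqrt (1 - q\<^sup>2) * sqrt (1 - r\<^sup>2) \<le> p"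
  shows "sqrt (1 - p\<^sup>2) \<le> sqrt (1 - q\<^sup>2) + sqrt (1 - r\<^sup>2)"
proof -
  define sin_p sin_q sin_r where "sin_p = sqrt (1 - p\<^sup>2)" "sin_q = sqrt (1 - q\<^sup>2)" "sin_r = sqrt (1 - r\<^sup>2)"
  have sin_sq: "sin_p\<^sup>2 = 1 - p\<^sup>2" "sin_q\<^sup>2 = 1 - q\<^sup>2" "sin_r\<^sup>2 = 1 - r\<^sup>2"
    and s_nonneg: "0 \<le> sin_p" "0 \<le> sin_q" "0 \<le> sin_r" and s_le1: "sin_p \<le> 1" "sin_q \<le> 1" "sin_r \<le> 1"
    using pqr power_le_one[of p 2] power_le_one[of q 2] power_le_one[of r 2]
    unfolding sin_p_sin_q_sin_r_def by auto
  have "sin_p \<le> sin_q + sin_r"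
  proof (cases "q * r \<le> sin_q * sin_r")
    case True
    text \<open>Then beta + gamma <= pi/2 and already sin_q + sin_r >= sin_q^2 + sin_r^2 >= 1 >= sin_p.\<close>
    have "(q * r)\<^sup>2 \<le> (sin_q * sin_r)\<^sup>2" using power_mono[OF True, of 2] pqr by simp
    then have "q\<^sup>2 * r\<^sup>2 \<le> (1 - q\<^sup>2) * (1 - r\<^sup>2)" by (simp add: power_mult_distrib sin_sq)
    then have "q\<^sup>2 + r\<^sup>2 \<le> 1" by (simp add: algebra_simps)
    moreover have "sin_q\<^sup>2 \<le> sin_q" "sin_r\<^sup>2 \<le> sin_r"
      using s_nonneg s_le1 by (simp_all add: power2_eq_square mult_left_le_one_le)
    ultimately show ?thesis using sin_sq s_le1 by linarith
  next
    case False
    text \<open>Otherwise sin alpha <= sin (beta + gamma) = sin_q r + q sin_r <= sin_q + sin_r.\<close>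
    have "(q * r - sin_q * sin_r)\<^sup>2 \<le> p\<^sup>2" using power_mono[of "q * r - sin_q * sin_r" p 2] False cos
      unfolding sin_p_sin_q_sin_r_def by simp
    moreover have "1 - (q * r - sin_q * sin_r)\<^sup>2 = (sin_q * r + q * sin_r)\<^sup>2"
    proof -
      have "1 - (q * r - sin_q * sin_r)\<^sup>2 - (sin_q * r + q * sin_r)\<^sup>2 = 1 - (q\<^sup>2 + sin_q\<^sup>2)*(r\<^sup>2 + sin_r\<^sup>2)"
        by (simp add: power2_eq_square algebra_simps)
      then show ?thesis using sin_sq by simp
    qed
    ultimately have "sin_p\<^sup>2 \<le> (sin_q * r + q * sin_r)\<^sup>2" using sin_sq by linarith
    then have "sin_p \<le> sin_q * r + q * sin_r" using power2_le_imp_le s_nonneg pqr by simp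
    moreover have "sin_q * r \<le> sin_q" "q * sin_r \<le> sin_r"
      using s_nonneg pqr by (simp_all add: mult_left_le_one_le mult_right_le_one_le)
    ultimately show ?thesis by linarith
  qed
  then show ?thesis unfolding sin_p_sin_q_sin_r_def .
qed

lemma corr_psd_power_mean:
  assumes corr: "corr_psd a b c" and k: "2 \<le> k"
  shows "(1 - \<bar>a\<bar> powr k) powr (1 / k) \<le> (1 - \<bar>b\<bar> powr k) powr (1 / k) + (1 - \<bar>c\<bar> powr k) powr (1 / k)"
proof -
  note A = corr_psd_bound[OF corr] and B = corr_psd_bound[OF corr_psd_swap[OF corr]]
  have unit: "0 \<le> \<bar>t\<bar>" "\<bar>t\<bar> \<le> 1" "0 \<le> sqrt (1 - t\<^sup>2)" "sqrt (1 - t\<^sup>2) \<le> 1"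
    if "t\<^sup>2 \<le> 1" for t :: real
    using that by (auto simp: abs_square_le_1)
  have "\<bar>b\<bar> * \<bar>c\<bar> - sqrt (1 - \<bar>b\<bar>\<^sup>2) * sqrt (1 - \<bar>c\<bar>\<^sup>2) \<le> \<bar>a\<bar>"
    using A(3) by (simp add: abs_mult)
  then have "sqrt (1 - \<bar>a\<bar>\<^sup>2) \<le> sqrt (1 - \<bar>b\<bar>\<^sup>2) + sqrt (1 - \<bar>c\<bar>\<^sup>2)"
    using unit[OF A(1)] unit[OF A(2)] unit[OF B(1)] by (intro sine_triangle) auto
  then have "sin_power k (sqrt (1 - \<bar>a\<bar>\<^sup>2))
      \<le> sin_power k (sqrt (1 - \<bar>b\<bar>\<^sup>2)) + sin_power k (sqrt (1 - \<bar>c\<bar>\<^sup>2))"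
    using unit[OF A(1)] unit[OF A(2)] unit[OF B(1)] by (intro sin_power_triangle[OF k]) auto
  moreover have "(1 - \<bar>t\<bar> powr k) powr (1/k) = sin_power k (sqrt (1 - \<bar>t\<bar>\<^sup>2))"
    if "t\<^sup>2 \<le> 1" for t
    using sin_power_cos[of "\<bar>t\<bar>" k] k unit[OF that] by simp
  ultimately show ?thesis using A(1,2) B(1) by simp
qed

theorem theorem4:
  fixes a b c :: real
  assumes B: "psd (vector [vector [1, a, b], vector [a, 1, c], vector [b, c, 1]] :: real^3^3)"
  shows "(\<forall>(I::real set) (f::real \<Rightarrow> real) (g::real \<Rightarrow> real).
            is_interval I \<and> I \<subseteq> {0..} \<and>
            strict_antimono_on I f \<and> f ` I = {-1..1} \<and>
            (\<forall>p q. p \<in> I \<longrightarrow> q \<in> I \<longrightarrow> p + q \<in> I \<longrightarrow>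
               f (p + q) = f p * f q - sqrt (1 - (f p)\<^sup>2) * sqrt (1 - (f q)\<^sup>2)) \<and>
            metric_preserving g
          \<longrightarrow> (let h = g \<circ> the_inv_into I f in h a \<le> h b + h c))
       \<and> (\<forall>k::real. k \<ge> 2 \<longrightarrow>
            (1 - \<bar>a\<bar> powr k) powr (1 / k)
              \<le> (1 - \<bar>b\<bar> powr k) powr (1 / k) + (1 - \<bar>c\<bar> powr k) powr (1 / k))"
proof -
  have corr: "corr_psd a b c" using psd_imp_corr_psd[OF B] .
  show ?thesis
  proof (intro conjI allI impI)
    fix I :: "real set" and f g :: "real \<Rightarrow> real"
    assume "is_interval I \<and> I \<subseteq> {0..} \<and> strict_antimono_on I f \<and> f ` I = {-1..1} \<and>
        (\<forall>p q. p \<in> I \<longrightarrow> q \<in> I \<longrightarrow> p + q \<in> I \<longrightarrow>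
           f (p + q) = f p * f q - sqrt (1 - (f p)\<^sup>2) * sqrt (1 - (f q)\<^sup>2)) \<and>
        metric_preserving g"
    then have "cosine_like I f" "metric_preserving g" by (simp_all add: cosine_like_def)
    then show "let h = g \<circ> the_inv_into I f in h a \<le> h b + h c"
      using corr_psd_metric_preserving[OF corr] by (simp add: Let_def)
  next
    fix k :: real
    assume "2 \<le> k"
    then show "(1 - \<bar>a\<bar> powr k) powr (1 / k)
        \<le> (1 - \<bar>b\<bar> powr k) powr (1 / k) + (1 - \<bar>c\<bar> powr k) powr (1 / k)"
      using corr_psd_power_mean[OF corr] by blast
  qed
qed

end
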